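(* Assume $K<\alpha m\underline h\,\underline c/\bar\rho_s$. As $(\xi,\eta)\to(0,0)$ with $\eta^2=o(\xi)$, the eigenvalues of $A(\xi,\eta)$ satisfy $$\lambda^1=-\Big(K+\frac{\alpha n\underline h\underline c}{\bar\rho_s}-\frac{\alpha m\underline h\underline c}{\bar\rho_s}\Big)\xi^2-\Big(K-\frac{\alpha m\underline h\underline c}{\bar\rho_s}\Big)\eta^2+o(\xi^2+\eta^2),$$ $$\lambda^2=-i\xi\tan\theta-\alpha\underline h(\xi^2+\eta^2)+o(\xi^2+\eta^2),\qquad \lambda^3=-a+o(1).$$ Consequently, at these frequencies the system is (to leading order) spectrally stable if and only if $$\big(K\bar\rho_s+\alpha\underline h\underline c(n-m)\big)\xi^2>\big(\alpha m\underline h\underline c-K\bar\rho_s\big)\eta^2;$$ in particular, if $K<\alpha(m-n)\underline h\underline c/\bar\rho_s$, the system is spectrally unstable at these frequencies.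
   Context: Parameters: $\theta\in(0,\pi/2)$, $\alpha>0$, $K\ge0$, $m,n>0$, $e,s>0$, $\bar\rho_s>0$, $\underline h>0$, $\underline c=\frac{e}{s}\underline h^m\tan^n\theta$, $a=\frac{s\bar\rho_s}{e\underline h}$. Symbol $A(\xi,\eta)=A_0+i\xi A_1-(\xi^2+\eta^2)A_2$ with $$A_0=\begin{pmatrix}0&0&0\\ \frac{am\underline c}{\underline h}&-a&0\\ -\frac{am\underline c}{\bar\rho_s}&\frac{a\underline h}{\bar\rho_s}&0\end{pmatrix},\ A_1=\begin{pmatrix}-\tan\theta&0&0\\ -\frac{\alpha an\underline c}{\tan\theta}&-\tan\theta&-\frac{\alpha an\underline c}{\tan\theta}\\ \frac{\alpha an\underline h\underline c}{\bar\rho_s\tan\theta}&0&\frac{\alpha an\underline h\underline c}{\bar\rho_s\tan\theta}\end{pmatrix},\ A_2=\begin{pmatrix}\alpha\underline h&0&\alpha\underline h\\0&0&0\\0&0&K\end{pmatrix}.$$ It is the Fourier symbol of the linearization about the constant state $(\underline h,\underline c,0)$ of the nondimensional erosion model. Spectrally stable at $(\xi,\eta)$ means all eigenvalues of $A(\xi,\eta)$ have strictly negative real part. *)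

theory Defs
  imports "HOL-Analysis.Analysis"
begin

text \<open>Constants of the linearised erosion model.  Parameters are listed in the
order theta alpha K m n e s rho_s h (h = underline h, rho_s = bar rho_s).\<close>

definition cbar :: "real \<Rightarrow> real \<Rightarrow> real \<Rightarrow> real \<Rightarrow> real \<Rightarrow> real \<Rightarrow> real" where
  "cbar \<theta> m n e s h = e / s * h powr m * tan \<theta> powr n"

definition acoef :: "real \<Rightarrow> real \<Rightarrow> real \<Rightarrow> real \<Rightarrow> real" where
  "acoef e s \<rho> h = s * \<rho> / (e * h)"

definition A0 :: "real \<Rightarrow> real \<Rightarrow> real \<Rightarrow> real \<Rightarrow> real \<Rightarrow> complex^3^3" where
  "A0 a m c h \<rho> = vector [
     vector [0, 0, 0],
     vector [of_real (a * m * c / h), of_real (- a), 0],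
     vector [of_real (- a * m * c / \<rho>), of_real (a * h / \<rho>), 0]]"

definition A1 :: "real \<Rightarrow> real \<Rightarrow> real \<Rightarrow> real \<Rightarrow> real \<Rightarrow> real \<Rightarrow> real \<Rightarrow> complex^3^3" where
  "A1 \<theta> \<alpha> a n c h \<rho> = vector [
     vector [of_real (- tan \<theta>), 0, 0],
     vector [of_real (- \<alpha> * a * n * c / tan \<theta>), of_real (- tan \<theta>), of_real (- \<alpha> * a * n * c / tan \<theta>)],
     vector [of_real (\<alpha> * a * n * h * c / (\<rho> * tan \<theta>)), 0, of_real (\<alpha> * a * n * h * c / (\<rho> * tan \<theta>))]]"

definition A2 :: "real \<Rightarrow> real \<Rightarrow> real \<Rightarrow> complex^3^3" where
  "A2 \<alpha> h K = vector [
     vector [of_real (\<alpha> * h), 0, of_real (\<alpha> * h)],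
     vector [0, 0, 0],
     vector [0, 0, of_real K]]"

definition symbolA ::
  "real \<Rightarrow> real \<Rightarrow> real \<Rightarrow> real \<Rightarrow> real \<Rightarrow> real \<Rightarrow> real \<Rightarrow> real \<Rightarrow> real \<Rightarrow> real \<Rightarrow> real \<Rightarrow> complex^3^3" where
  "symbolA \<theta> \<alpha> K m n e s \<rho> h \<xi> \<eta> =
     (let c = cbar \<theta> m n e s h; a = acoef e s \<rho> h in
      \<chi> i j. A0 a m c h \<rho> $ i $ j + \<i> * of_real \<xi> * A1 \<theta> \<alpha> a n c h \<rho> $ i $ j
             - of_real (\<xi>\<^sup>2 + \<eta>\<^sup>2) * A2 \<alpha> h K $ i $ j)"

definition spectrally_stable :: "complex^'n^'n \<Rightarrow> bool" where
  "spectrally_stable M \<longleftrightarrow> (\<forall>z. det (mat z - M) = 0 \<longrightarrow> Re z < 0)"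

definition lead1 :: "real \<Rightarrow> real \<Rightarrow> real \<Rightarrow> real \<Rightarrow> real \<Rightarrow> real \<Rightarrow> real \<Rightarrow> real \<Rightarrow> real \<Rightarrow> real \<Rightarrow> real \<Rightarrow> complex" where
  "lead1 \<theta> \<alpha> K m n e s \<rho> h \<xi> \<eta> =
     (let c = cbar \<theta> m n e s h in
      of_real (- (K + \<alpha> * n * h * c / \<rho> - \<alpha> * m * h * c / \<rho>) * \<xi>\<^sup>2
               - (K - \<alpha> * m * h * c / \<rho>) * \<eta>\<^sup>2))"

definition lead2 :: "real \<Rightarrow> real \<Rightarrow> real \<Rightarrow> real \<Rightarrow> real \<Rightarrow> complex" where
  "lead2 \<theta> \<alpha> h \<xi> \<eta> \<equiv> - \<i> * of_real (\<xi> * tan \<theta>) - of_real (\<alpha> * h * (\<xi>\<^sup>2 + \<eta>\<^sup>2))"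

end

theory Submission
  imports Defs "HOL-Complex_Analysis.Cauchy_Integral_Formula"
begin

text \<open>
  With \<zeta> = \<xi>^2 + \<eta>^2, the characteristic polynomial det (y I - A(\<xi>,\<eta>)) is an explicit cubic in y
  whose coefficients are polynomials in \<xi> and \<zeta>. Along sequences with \<xi> \<rightarrow> 0 and \<zeta> = o(\<xi>)
  it behaves like y^3 + a y^2 + i a \<xi> tan \<theta> y + o(\<xi>^2). Ordering the roots by modulus, Vieta's
  formulas then force the largest root to tend to -a and the two others to be o(\<xi>) and
  -i \<xi> tan \<theta> + o(\<xi>). To reach precision o(\<zeta>), evaluate the cubic at the claimed leading terms:
  the residual is o(\<xi> \<zeta>), while the factors belonging to the two other roots have exact orders
  \<xi> and 1. The stability criterion is the sign of the real part of the first leading term, and when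
  K < \<alpha> (m - n) h c / \<rho> that real part exceeds a positive multiple of \<zeta>, so the first
  eigenvalue eventually lies in the right half-plane.
\<close>

lemma cubic_roots_ordered_by_norm:
  fixes c0 c1 c2 :: complex
  obtains r1 r2 r3 where "cmod r1 \<le> cmod r2" "cmod r2 \<le> cmod r3"
    and "c2 = - (r1 + r2 + r3)" "c1 = r1 * r2 + r1 * r3 + r2 * r3" "c0 = - (r1 * r2 * r3)"
proof -
  define a where "a i = (if i = 0 then c0 else if i = 1 then c1 else if i = 2 then c2 else 1)" for i :: nat
  have "\<exists>i\<in>{1..3}. a i \<noteq> 0"
    by (rule bexI[of _ 3]) (auto simp: a_def)
  then obtain r where "(\<Sum>i\<le>3. a i * r ^ i) = 0"
    using fundamental_theorem_of_algebra[of a 3] by blast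
  then have root: "r ^ 3 + c2 * r\<^sup>2 + c1 * r + c0 = 0"
    by (simp add: a_def eval_nat_numeral algebra_simps)
  \<comment> \<open>the other two roots solve the quadratic cofactor y^2 + B y + C\<close>
  define B where "B = c2 + r"
  define C where "C = c1 + r * (c2 + r)"
  define d where "d = csqrt (B\<^sup>2 - 4 * C)"
  define p1 where "p1 = (- B + d) / 2"
  define p2 where "p2 = (- B - d) / 2"
  have sum: "p1 + p2 = - B"
    by (simp add: p1_def p2_def field_simps)
  have prod: "p1 * p2 = C"
  proof -
    have "p1 * p2 = (B\<^sup>2 - d\<^sup>2) / 4"
      by (simp add: p1_def p2_def field_simps power2_eq_square)
    then show ?thesis by (simp add: d_def)
  qed
  have v2: "c2 = - (p1 + p2 + r)"
    using sum by (simp add: B_def)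
  have v1: "c1 = p1 * p2 + p1 * r + p2 * r"
  proof -
    have c2r: "c2 + r = - (p1 + p2)"
      using sum by (simp add: B_def)
    have "c1 = C - r * (c2 + r)"
      by (simp add: C_def)
    also have "\<dots> = p1 * p2 + p1 * r + p2 * r"
      unfolding c2r prod[symmetric] by (simp add: algebra_simps)
    finally show ?thesis .
  qed
  have v0: "c0 = - (p1 * p2 * r)"
    using root v1 v2 by (simp add: algebra_simps power2_eq_square power3_eq_cube add_eq_0_iff)
  let ?P = "\<lambda>r1 r2 r3. cmod r1 \<le> cmod r2 \<and> cmod r2 \<le> cmod r3 \<and>
     c2 = - (r1 + r2 + r3) \<and> c1 = r1 * r2 + r1 * r3 + r2 * r3 \<and> c0 = - (r1 * r2 * r3)"
  have "?P p1 p2 r \<or> ?P p1 r p2 \<or> ?P p2 p1 r \<or> ?P p2 r p1 \<or> ?P r p1 p2 \<or> ?P r p2 p1"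
    using v0 v1 v2 by (simp add: algebra_simps) linarith
  then show ?thesis using that by blast
qed

lemma tendsto_zero_cancel_factor:
  fixes f g :: "'a \<Rightarrow> 'b::real_normed_div_algebra"
  assumes "((\<lambda>k. f k * g k) \<longlongrightarrow> 0) F" and "\<forall>\<^sub>F k in F. c \<le> norm (g k)" and "0 < c"
  shows "(f \<longlongrightarrow> 0) F"
proof (rule Lim_null_comparison)
  show "\<forall>\<^sub>F k in F. norm (f k) \<le> norm (f k * g k) / c"
    using assms(2) proof eventually_elim
    case (elim k)
    then have "norm (f k) * c \<le> norm (f k) * norm (g k)"
      by (simp add: mult_left_mono)
    then show ?case using \<open>0 < c\<close> by (simp add: field_simps norm_mult)
  qed
  show "((\<lambda>k. norm (f k * g k) / c) \<longlongrightarrow> 0) F"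
    using tendsto_divide[OF tendsto_norm_zero[OF assms(1)] tendsto_const[of c]] \<open>0 < c\<close> by simp
qed

lemma tendsto_zero_cancel_nonzero_factor:
  fixes f g :: "'a \<Rightarrow> 'b::real_normed_div_algebra"
  assumes "((\<lambda>k. f k * g k) \<longlongrightarrow> 0) F" and "(g \<longlongrightarrow> L) F" and "L \<noteq> 0"
  shows "(f \<longlongrightarrow> 0) F"
proof (rule tendsto_zero_cancel_factor[OF assms(1)])
  show "\<forall>\<^sub>F k in F. norm L / 2 \<le> norm (g k)"
    using order_tendstoD(1)[OF tendsto_norm[OF assms(2)], of "norm L / 2"] assms(3)
    by (auto elim: eventually_mono)
qed (use assms(3) in simp)

lemma smaller_root_tendsto:
  fixes w1 w2 :: "'a \<Rightarrow> 'b::real_normed_div_algebra"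
  assumes "\<And>k. norm (w1 k) \<le> norm (w2 k)"
    and "((\<lambda>k. w1 k * w2 k) \<longlongrightarrow> 0) F" and "((\<lambda>k. w1 k + w2 k) \<longlongrightarrow> S) F"
  shows "(w1 \<longlongrightarrow> 0) F" and "(w2 \<longlongrightarrow> S) F"
proof -
  show w1: "(w1 \<longlongrightarrow> 0) F"
  proof (rule Lim_null_comparison)
    show "\<forall>\<^sub>F k in F. norm (w1 k) \<le> sqrt (norm (w1 k * w2 k))"
    proof (rule always_eventually, rule allI)
      fix k
      have "(norm (w1 k))\<^sup>2 \<le> norm (w1 k) * norm (w2 k)"
        using assms(1)[of k] by (simp add: power2_eq_square mult_left_mono)
      then show "norm (w1 k) \<le> sqrt (norm (w1 k * w2 k))"
        by (simp add: norm_mult real_le_rsqrt)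
    qed
    show "((\<lambda>k. sqrt (norm (w1 k * w2 k))) \<longlongrightarrow> 0) F"
      using tendsto_real_sqrt[OF tendsto_norm_zero[OF assms(2)]] by simp
  qed
  show "(w2 \<longlongrightarrow> S) F"
    using tendsto_diff[OF assms(3) w1] by simp
qed

lemma tendsto_zero_mult_bounded:
  fixes f g :: "'a \<Rightarrow> 'b::real_normed_algebra"
  assumes "(f \<longlongrightarrow> 0) F" and "\<And>k. norm (g k) \<le> B"
  shows "((\<lambda>k. f k * g k) \<longlongrightarrow> 0) F"
proof (rule Lim_null_comparison)
  show "\<forall>\<^sub>F k in F. norm (f k * g k) \<le> norm (f k) * B"
    using assms(2) by (intro always_eventually allI order_trans[OF norm_mult_ineq] mult_left_mono) auto
  show "((\<lambda>k. norm (f k) * B) \<longlongrightarrow> 0) F"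
    using tendsto_mult_right[OF tendsto_norm_zero[OF assms(1)]] by simp
qed

lemma eventually_Re_pos_of_relative_error:
  fixes l L :: "'a \<Rightarrow> complex"
  assumes "((\<lambda>k. (l k - L k) / of_real (Z k)) \<longlongrightarrow> 0) F"
    and "\<And>k. 0 < Z k" and "0 < \<delta>" and "\<And>k. \<delta> * Z k \<le> Re (L k)"
  shows "\<forall>\<^sub>F k in F. 0 < Re (l k)"
  using order_tendstoD(2)[OF tendsto_norm_zero[OF assms(1)] \<open>0 < \<delta>\<close>]
proof eventually_elim
  case (elim k)
  then have "cmod (l k - L k) < \<delta> * Z k"
    using assms(2)[of k] by (simp add: norm_divide pos_divide_less_eq)
  moreover have "Re (l k) = Re (L k) + Re (l k - L k)"
    by simp
  ultimately show ?case
    using abs_Re_le_cmod[of "l k - L k"] assms(4)[of k] by linarith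
qed

lemma largest_root_eventually_large:
  fixes r1 r2 r3 :: "'a \<Rightarrow> 'b::real_normed_vector"
  assumes norm_le: "\<And>k. norm (r1 k) \<le> norm (r3 k)" "\<And>k. norm (r2 k) \<le> norm (r3 k)"
    and sum: "((\<lambda>k. r1 k + r2 k + r3 k) \<longlongrightarrow> - A) F" and "A \<noteq> 0"
  shows "\<forall>\<^sub>F k in F. norm A / 6 \<le> norm (r3 k)"
proof -
  have bound: "norm (r1 k + r2 k + r3 k) \<le> 3 * norm (r3 k)" for k
  proof -
    have "norm (r1 k + r2 k + r3 k) \<le> norm (r1 k) + norm (r2 k) + norm (r3 k)"
      by (meson norm_triangle_le norm_triangle_ineq add_mono order_refl)
    then show ?thesis using norm_le[of k] by linarith
  qed
  have "\<forall>\<^sub>F k in F. norm A / 2 < norm (r1 k + r2 k + r3 k)"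
    using order_tendstoD(1)[OF tendsto_norm[OF sum], of "norm A / 2"] \<open>A \<noteq> 0\<close> by simp
  then show ?thesis
  proof eventually_elim
    case (elim k)
    then show ?case using bound[of k] by linarith
  qed
qed

lemma largest_root_tendsto:
  fixes r1 r2 r3 x :: "'a \<Rightarrow> 'b::real_normed_field"
  assumes norm_le: "\<And>k. norm (r1 k) \<le> norm (r3 k)" "\<And>k. norm (r2 k) \<le> norm (r3 k)"
    and x: "\<And>k. x k \<noteq> 0" "(x \<longlongrightarrow> 0) F"
    and sum: "((\<lambda>k. r1 k + r2 k + r3 k) \<longlongrightarrow> - A) F" and "A \<noteq> 0"
    and pairs: "((\<lambda>k. (r1 k * r2 k + (r1 k + r2 k) * r3 k) / x k) \<longlongrightarrow> B) F"
    and prod: "((\<lambda>k. r1 k * r2 k * r3 k / x k ^ 2) \<longlongrightarrow> 0) F"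
  shows "(r3 \<longlongrightarrow> - A) F" and "((\<lambda>k. (r1 k + r2 k) / x k) \<longlongrightarrow> - B / A) F"
    and "((\<lambda>k. r1 k * r2 k / x k ^ 2) \<longlongrightarrow> 0) F"
proof -
  define s where "s k = (r1 k + r2 k) / x k" for k
  define p where "p k = r1 k * r2 k / x k ^ 2" for k
  have r3_large: "\<forall>\<^sub>F k in F. norm A / 6 \<le> norm (r3 k)"
    by (rule largest_root_eventually_large[OF norm_le sum \<open>A \<noteq> 0\<close>])
  have A_pos: "0 < norm A / 6" using \<open>A \<noteq> 0\<close> by simp
  have "(\<lambda>k. p k * r3 k) = (\<lambda>k. r1 k * r2 k * r3 k / x k ^ 2)"
    by (simp add: p_def fun_eq_iff)
  then show p_lim: "(p \<longlongrightarrow> 0) F"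
    using tendsto_zero_cancel_factor[OF _ r3_large A_pos] prod by metis
  have "(\<lambda>k. (r1 k * r2 k + (r1 k + r2 k) * r3 k) / x k - x k * p k) = (\<lambda>k. s k * r3 k)"
    using x(1) by (auto simp: s_def p_def field_simps power2_eq_square)
  then have sr3: "((\<lambda>k. s k * r3 k) \<longlongrightarrow> B) F"
    using tendsto_diff[OF pairs tendsto_mult[OF x(2) p_lim]] by simp
  have "((\<lambda>k. x k * s k * r3 k) \<longlongrightarrow> 0) F"
    using tendsto_mult[OF x(2) sr3] by (simp add: mult.assoc)
  then have xs: "((\<lambda>k. x k * s k) \<longlongrightarrow> 0) F"
    by (rule tendsto_zero_cancel_factor[OF _ r3_large A_pos])
  have "r3 = (\<lambda>k. (r1 k + r2 k + r3 k) - x k * s k)"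
    using x(1) by (auto simp: s_def)
  then show r3: "(r3 \<longlongrightarrow> - A) F"
    using tendsto_diff[OF sum xs] by simp
  have "((\<lambda>k. s k * r3 k + B / A * r3 k) \<longlongrightarrow> B + B / A * - A) F"
    by (intro tendsto_intros sr3 r3)
  then have "((\<lambda>k. (s k + B / A) * r3 k) \<longlongrightarrow> 0) F"
    using \<open>A \<noteq> 0\<close> by (simp add: algebra_simps)
  then have "((\<lambda>k. s k + B / A) \<longlongrightarrow> 0) F"
    by (rule tendsto_zero_cancel_factor[OF _ r3_large A_pos])
  then show "(s \<longlongrightarrow> - B / A) F"
    using tendsto_add[OF _ tendsto_const[of "- B / A"]] by fastforce
qed

lemma root_tendsto_of_residual:
  fixes p t r q w x z :: "'a \<Rightarrow> 'b::real_normed_field"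
  assumes factor: "\<And>k. p k = (t k - r k) * (t k - q k) * (t k - w k)"
    and "\<And>k. x k \<noteq> 0" and "\<And>k. z k \<noteq> 0"
    and residual: "((\<lambda>k. p k / (x k * z k)) \<longlongrightarrow> 0) F"
    and \<beta>: "((\<lambda>k. (t k - q k) / x k) \<longlongrightarrow> \<beta>) F" and \<gamma>: "((\<lambda>k. t k - w k) \<longlongrightarrow> \<gamma>) F"
    and "\<beta> \<noteq> 0" and "\<gamma> \<noteq> 0"
  shows "((\<lambda>k. (r k - t k) / z k) \<longlongrightarrow> 0) F"
proof -
  have "((\<lambda>k. (t k - r k) / z k) \<longlongrightarrow> 0) F"
  proof (rule tendsto_zero_cancel_nonzero_factor)
    show "((\<lambda>k. (t k - r k) / z k * ((t k - q k) / x k * (t k - w k))) \<longlongrightarrow> 0) F"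
      using residual assms(2,3) by (simp add: factor field_simps)
    show "((\<lambda>k. (t k - q k) / x k * (t k - w k)) \<longlongrightarrow> \<beta> * \<gamma>) F"
      by (rule tendsto_mult[OF \<beta> \<gamma>])
  qed (use \<open>\<beta> \<noteq> 0\<close> \<open>\<gamma> \<noteq> 0\<close> in simp)
  then show ?thesis
    using tendsto_minus by (fastforce simp: minus_divide_left)
qed

text \<open>Here \<zeta> stands for \<xi>^2 + \<eta>^2; det_symbolA shows which parameters turn this into det (y I - A(\<xi>,\<eta>)).\<close>
definition erosion_charpoly ::
  "complex \<Rightarrow> complex \<Rightarrow> complex \<Rightarrow> complex \<Rightarrow> complex \<Rightarrow> complex \<Rightarrow> complex \<Rightarrow> complex \<Rightarrow> complex \<Rightarrow> complex"
  where "erosion_charpoly a T N g K H \<xi> \<zeta> y =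
    (y + \<i> * \<xi> * T + H * \<zeta>) * (y + \<i> * \<xi> * T + a) * (y + K * \<zeta>)
    - \<i> * \<xi> * (a * N / T) * (y + \<i> * \<xi> * T)\<^sup>2 - a * g * \<zeta> * (y + \<i> * \<xi> * T)"

locale erosion_charpoly_sequence =
  fixes a T N g K H :: complex and x z :: "nat \<Rightarrow> complex"
  assumes a_nonzero: "a \<noteq> 0" and T_nonzero: "T \<noteq> 0"
    and x_nonzero: "\<And>k. x k \<noteq> 0" and z_nonzero: "\<And>k. z k \<noteq> 0"
    and x_tendsto: "x \<longlonglongrightarrow> 0" and z_over_x_tendsto: "(\<lambda>k. z k / x k) \<longlonglongrightarrow> 0"
    and x_sq_over_z_bounded: "\<And>k. norm (x k ^ 2 / z k) \<le> 1"
begin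

abbreviation P :: "nat \<Rightarrow> complex \<Rightarrow> complex" where
  "P k \<equiv> erosion_charpoly a T N g K H (x k) (z k)"

definition approx_root1 :: "nat \<Rightarrow> complex" where
  "approx_root1 k = - (K - g) * z k - N * x k ^ 2"

definition approx_root2 :: "nat \<Rightarrow> complex" where
  "approx_root2 k = - \<i> * x k * T - H * z k"

lemma z_tendsto: "z \<longlonglongrightarrow> 0"
proof -
  have "(\<lambda>k. x k * (z k / x k)) = z"
    by (simp add: fun_eq_iff x_nonzero)
  then show ?thesis
    using tendsto_mult[OF x_tendsto z_over_x_tendsto] by simp
qed

lemma approx_root1_tendsto: "approx_root1 \<longlonglongrightarrow> 0"
proof -
  have "(\<lambda>k. - (K - g) * z k - N * x k ^ 2) \<longlonglongrightarrow> - (K - g) * 0 - N * 0 ^ 2"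
    by (intro tendsto_intros z_tendsto x_tendsto)
  then show ?thesis
    by (simp add: approx_root1_def[abs_def])
qed

lemma approx_root2_tendsto: "approx_root2 \<longlonglongrightarrow> 0"
proof -
  have "(\<lambda>k. - \<i> * x k * T - H * z k) \<longlonglongrightarrow> - \<i> * 0 * T - H * 0"
    by (intro tendsto_intros z_tendsto x_tendsto)
  then show ?thesis
    by (simp add: approx_root2_def[abs_def])
qed

lemma approx_root1_over_x_tendsto: "(\<lambda>k. approx_root1 k / x k) \<longlonglongrightarrow> 0"
proof -
  have "(\<lambda>k. - (K - g) * (z k / x k) - N * x k) \<longlonglongrightarrow> - (K - g) * 0 - N * 0"
    by (intro tendsto_intros z_over_x_tendsto x_tendsto)
  moreover have "approx_root1 k / x k = - (K - g) * (z k / x k) - N * x k" for k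
    using x_nonzero[of k] by (simp add: approx_root1_def field_simps power2_eq_square)
  ultimately show ?thesis
    by simp
qed

lemma approx_root2_over_x_tendsto: "(\<lambda>k. approx_root2 k / x k) \<longlonglongrightarrow> - \<i> * T"
proof -
  have "(\<lambda>k. - \<i> * T - H * (z k / x k)) \<longlonglongrightarrow> - \<i> * T - H * 0"
    by (intro tendsto_intros z_over_x_tendsto)
  moreover have "approx_root2 k / x k = - \<i> * T - H * (z k / x k)" for k
    using x_nonzero[of k] by (simp add: approx_root2_def field_simps)
  ultimately show ?thesis
    by simp
qed

lemma charpoly_coefficients_tendsto:
  obtains c2 c1 c0 where "\<And>k y. P k y = y ^ 3 + c2 k * y\<^sup>2 + c1 k * y + c0 k"
    and "c2 \<longlonglongrightarrow> a" and "(\<lambda>k. c1 k / x k) \<longlonglongrightarrow> \<i> * T * a"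
    and "(\<lambda>k. c0 k / x k ^ 2) \<longlonglongrightarrow> 0"
proof -
  define u where "u k = z k / x k" for k
  have z: "z k = x k * u k" for k
    using x_nonzero[of k] by (simp add: u_def)
  have u_tendsto: "u \<longlonglongrightarrow> 0"
    using z_over_x_tendsto by (simp add: u_def[abs_def])
  define c2 where "c2 k = 2 * \<i> * x k * T + H * z k + a + K * z k - \<i> * x k * (a * N / T)" for k
  define c1 where "c1 k = (\<i> * x k * T + H * z k) * (\<i> * x k * T + a)
      + K * z k * (2 * \<i> * x k * T + H * z k + a)
      - 2 * \<i> * x k * T * (\<i> * x k * (a * N / T)) - a * g * z k" for k
  define c0 where "c0 k = K * z k * (\<i> * x k * T + H * z k) * (\<i> * x k * T + a)
      - \<i> * x k * (a * N / T) * (\<i> * x k * T)\<^sup>2 - a * g * z k * (\<i> * x k * T)" for k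
  show ?thesis
  proof
    show "P k y = y ^ 3 + c2 k * y\<^sup>2 + c1 k * y + c0 k" for k y
      by (simp add: erosion_charpoly_def c2_def c1_def c0_def algebra_simps power2_eq_square power3_eq_cube)
    have "c2 \<longlonglongrightarrow> 2 * \<i> * 0 * T + H * 0 + a + K * 0 - \<i> * 0 * (a * N / T)"
      unfolding c2_def[abs_def] by (intro tendsto_intros x_tendsto z_tendsto)
    then show "c2 \<longlonglongrightarrow> a" by simp
    have "c1 k / x k = (\<i> * T + H * u k) * (\<i> * x k * T + a) + K * u k * (2 * \<i> * x k * T + H * z k + a)
        - 2 * \<i> * T * (\<i> * x k * (a * N / T)) - a * g * u k" for k
      unfolding c1_def z using x_nonzero[of k] by (simp add: field_simps)
    moreover have "(\<lambda>k. (\<i> * T + H * u k) * (\<i> * x k * T + a) + K * u k * (2 * \<i> * x k * T + H * z k + a)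
        - 2 * \<i> * T * (\<i> * x k * (a * N / T)) - a * g * u k)
      \<longlonglongrightarrow> (\<i> * T + H * 0) * (\<i> * 0 * T + a) + K * 0 * (2 * \<i> * 0 * T + H * 0 + a)
        - 2 * \<i> * T * (\<i> * 0 * (a * N / T)) - a * g * 0"
      by (intro tendsto_intros x_tendsto z_tendsto u_tendsto)
    ultimately show "(\<lambda>k. c1 k / x k) \<longlonglongrightarrow> \<i> * T * a" by simp
    have "c0 k / x k ^ 2 = K * u k * (\<i> * T + H * u k) * (\<i> * x k * T + a)
        - \<i> * x k * (a * N / T) * (\<i> * T)\<^sup>2 - a * g * u k * \<i> * T" for k
      unfolding c0_def z using x_nonzero[of k] by (simp add: field_simps power2_eq_square)
    moreover have "(\<lambda>k. K * u k * (\<i> * T + H * u k) * (\<i> * x k * T + a)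
        - \<i> * x k * (a * N / T) * (\<i> * T)\<^sup>2 - a * g * u k * \<i> * T)
      \<longlonglongrightarrow> K * 0 * (\<i> * T + H * 0) * (\<i> * 0 * T + a) - \<i> * 0 * (a * N / T) * (\<i> * T)\<^sup>2 - a * g * 0 * \<i> * T"
      by (intro tendsto_intros x_tendsto u_tendsto)
    ultimately show "(\<lambda>k. c0 k / x k ^ 2) \<longlonglongrightarrow> 0" by simp
  qed
qed

lemma charpoly_approx_root1_eq:
  "P k (approx_root1 k) / (x k * z k) =
      \<i> * T * (\<i> * x k * T + approx_root1 k) * (g - N * (x k ^ 2 / z k))
    + (a + \<i> * x k * T + approx_root1 k) * (g * (z k / x k) - N * x k) * (H - (K - g) - N * (x k ^ 2 / z k))
    - \<i> * a * N / T * (2 * (\<i> * x k * T) + approx_root1 k) * (- (K - g) - N * (x k ^ 2 / z k))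
    - a * g * (- (K - g) * (z k / x k) - N * x k)"
  using x_nonzero[of k] z_nonzero[of k] T_nonzero
  by (simp add: erosion_charpoly_def approx_root1_def field_simps power2_eq_square)

lemma charpoly_approx_root1_residual:
  "(\<lambda>k. P k (approx_root1 k) / (x k * z k)) \<longlonglongrightarrow> 0"
proof -
  have s: "(\<lambda>k. \<i> * x k * T) \<longlonglongrightarrow> 0"
    using tendsto_mult_left_zero[OF tendsto_mult_right_zero[OF x_tendsto]] by blast
  have bounded: "norm (c - d * (x k ^ 2 / z k)) \<le> norm c + norm d" for c d k
    using norm_triangle_ineq4[of c "d * (x k ^ 2 / z k)"] x_sq_over_z_bounded[of k]
    by (smt (verit, best) mult_left_le norm_ge_zero norm_mult)
  have t1: "(\<lambda>k. \<i> * T * (\<i> * x k * T + approx_root1 k)) \<longlonglongrightarrow> 0"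
    by (intro tendsto_mult_right_zero tendsto_add_zero s approx_root1_tendsto)
  have "(\<lambda>k. g * (z k / x k) - N * x k) \<longlonglongrightarrow> g * 0 - N * 0"
    by (intro tendsto_intros z_over_x_tendsto x_tendsto)
  then have t2: "(\<lambda>k. (a + \<i> * x k * T + approx_root1 k) * (g * (z k / x k) - N * x k)) \<longlonglongrightarrow> 0"
    using tendsto_mult[OF tendsto_add[OF tendsto_add[OF tendsto_const s] approx_root1_tendsto]] by fastforce
  have t3: "(\<lambda>k. \<i> * a * N / T * (2 * (\<i> * x k * T) + approx_root1 k)) \<longlonglongrightarrow> 0"
    by (intro tendsto_mult_right_zero tendsto_add_zero s approx_root1_tendsto)
  have "(\<lambda>k. - (K - g) * (z k / x k) - N * x k) \<longlonglongrightarrow> - (K - g) * 0 - N * 0"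
    by (intro tendsto_intros z_over_x_tendsto x_tendsto)
  then have t4: "(\<lambda>k. a * g * (- (K - g) * (z k / x k) - N * x k)) \<longlonglongrightarrow> 0"
    by (intro tendsto_mult_right_zero) simp
  show ?thesis
    unfolding charpoly_approx_root1_eq
    using tendsto_diff[OF tendsto_diff[OF tendsto_add[OF tendsto_zero_mult_bounded[OF t1 bounded]
        tendsto_zero_mult_bounded[OF t2 bounded]] tendsto_zero_mult_bounded[OF t3 bounded]] t4]
    by simp
qed

lemma charpoly_approx_root2_residual:
  "(\<lambda>k. P k (approx_root2 k) / (x k * z k)) \<longlonglongrightarrow> 0"
proof -
  have "P k (approx_root2 k) / (x k * z k) = - (\<i> * a * N / T) * H\<^sup>2 * z k + a * g * H * (z k / x k)" for k
    using x_nonzero[of k] z_nonzero[of k] T_nonzero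
    by (simp add: erosion_charpoly_def approx_root2_def field_simps power2_eq_square)
  moreover have "(\<lambda>k. - (\<i> * a * N / T) * H\<^sup>2 * z k + a * g * H * (z k / x k))
      \<longlonglongrightarrow> - (\<i> * a * N / T) * H\<^sup>2 * 0 + a * g * H * 0"
    by (intro tendsto_intros z_tendsto z_over_x_tendsto)
  ultimately show ?thesis by simp
qed

lemma charpoly_roots_coarse:
  obtains r1 r2 r3 where "\<And>k y. P k y = (y - r1 k) * (y - r2 k) * (y - r3 k)"
    and "r3 \<longlonglongrightarrow> - a" and "(\<lambda>k. r1 k / x k) \<longlonglongrightarrow> 0" and "(\<lambda>k. r2 k / x k) \<longlonglongrightarrow> - \<i> * T"
proof -
  obtain c2 c1 c0 where P: "\<And>k y. P k y = y ^ 3 + c2 k * y\<^sup>2 + c1 k * y + c0 k"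
    and c2: "c2 \<longlonglongrightarrow> a" and c1: "(\<lambda>k. c1 k / x k) \<longlonglongrightarrow> \<i> * T * a"
    and c0: "(\<lambda>k. c0 k / x k ^ 2) \<longlonglongrightarrow> 0"
    using charpoly_coefficients_tendsto by blast
  have "\<forall>k. \<exists>r1 r2 r3. cmod r1 \<le> cmod r2 \<and> cmod r2 \<le> cmod r3 \<and> c2 k = - (r1 + r2 + r3)
      \<and> c1 k = r1 * r2 + r1 * r3 + r2 * r3 \<and> c0 k = - (r1 * r2 * r3)"
    by (metis cubic_roots_ordered_by_norm)
  then obtain r1 r2 r3 where le12: "\<And>k. cmod (r1 k) \<le> cmod (r2 k)" and le23: "\<And>k. cmod (r2 k) \<le> cmod (r3 k)"
    and v2: "\<And>k. c2 k = - (r1 k + r2 k + r3 k)" and v1: "\<And>k. c1 k = r1 k * r2 k + r1 k * r3 k + r2 k * r3 k"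
    and v0: "\<And>k. c0 k = - (r1 k * r2 k * r3 k)"
    by metis
  have sum: "(\<lambda>k. r1 k + r2 k + r3 k) \<longlonglongrightarrow> - a"
    using tendsto_minus[OF c2] unfolding v2 minus_minus .
  have pairs: "(\<lambda>k. (r1 k * r2 k + (r1 k + r2 k) * r3 k) / x k) \<longlonglongrightarrow> \<i> * T * a"
    using c1 by (simp add: v1 algebra_simps)
  have prod: "(\<lambda>k. r1 k * r2 k * r3 k / x k ^ 2) \<longlonglongrightarrow> 0"
    using tendsto_minus[OF c0] by (simp add: v0)
  note largest = largest_root_tendsto[OF order_trans[OF le12 le23] le23 x_nonzero x_tendsto sum a_nonzero pairs prod]
  have "(\<lambda>k. r1 k / x k + r2 k / x k) \<longlonglongrightarrow> - \<i> * T"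
    using largest(2) a_nonzero by (simp add: add_divide_distrib)
  moreover have "(\<lambda>k. r1 k / x k * (r2 k / x k)) \<longlonglongrightarrow> 0"
    using largest(3) by (simp add: power2_eq_square)
  ultimately have "(\<lambda>k. r1 k / x k) \<longlonglongrightarrow> 0" "(\<lambda>k. r2 k / x k) \<longlonglongrightarrow> - \<i> * T"
    using smaller_root_tendsto[of "\<lambda>k. r1 k / x k" "\<lambda>k. r2 k / x k"] le12
    by (simp_all add: norm_divide divide_right_mono)
  moreover have "P k y = (y - r1 k) * (y - r2 k) * (y - r3 k)" for k y
    unfolding P v2 v1 v0 by (simp add: algebra_simps power2_eq_square power3_eq_cube)
  ultimately show ?thesis
    using that largest(1) by blast
qed

lemma charpoly_roots_tendsto:
  "\<exists>r1 r2 r3. (\<forall>k y. P k y = (y - r1 k) * (y - r2 k) * (y - r3 k))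
    \<and> (\<lambda>k. (r1 k - approx_root1 k) / z k) \<longlonglongrightarrow> 0
    \<and> (\<lambda>k. (r2 k - approx_root2 k) / z k) \<longlonglongrightarrow> 0
    \<and> r3 \<longlonglongrightarrow> - a"
proof -
  obtain r1 r2 r3 where factor: "\<And>k y. P k y = (y - r1 k) * (y - r2 k) * (y - r3 k)"
    and r3: "r3 \<longlonglongrightarrow> - a" and r1: "(\<lambda>k. r1 k / x k) \<longlonglongrightarrow> 0" and r2: "(\<lambda>k. r2 k / x k) \<longlonglongrightarrow> - \<i> * T"
    using charpoly_roots_coarse by blast
  have "(\<lambda>k. (r1 k - approx_root1 k) / z k) \<longlonglongrightarrow> 0"
  proof (rule root_tendsto_of_residual[OF factor x_nonzero z_nonzero charpoly_approx_root1_residual])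
    show "(\<lambda>k. (approx_root1 k - r2 k) / x k) \<longlonglongrightarrow> \<i> * T"
      using tendsto_diff[OF approx_root1_over_x_tendsto r2] by (simp add: diff_divide_distrib)
    show "(\<lambda>k. approx_root1 k - r3 k) \<longlonglongrightarrow> a"
      using tendsto_diff[OF approx_root1_tendsto r3] by simp
  qed (use a_nonzero T_nonzero in simp_all)
  moreover have "(\<lambda>k. (r2 k - approx_root2 k) / z k) \<longlonglongrightarrow> 0"
  proof (rule root_tendsto_of_residual[where q = r1])
    show "P k (approx_root2 k) = (approx_root2 k - r2 k) * (approx_root2 k - r1 k) * (approx_root2 k - r3 k)" for k
      by (simp add: factor)
    show "(\<lambda>k. (approx_root2 k - r1 k) / x k) \<longlonglongrightarrow> - \<i> * T"
      using tendsto_diff[OF approx_root2_over_x_tendsto r1] by (simp add: diff_divide_distrib)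
    show "(\<lambda>k. approx_root2 k - r3 k) \<longlonglongrightarrow> a"
      using tendsto_diff[OF approx_root2_tendsto r3] by simp
  qed (use a_nonzero T_nonzero x_nonzero z_nonzero charpoly_approx_root2_residual in simp_all)
  ultimately show ?thesis
    using factor r3 by blast
qed

end

lemma det_symbolA:
  assumes "tan \<theta> \<noteq> 0" "\<rho> \<noteq> 0" "h \<noteq> 0"
  shows "det (mat y - symbolA \<theta> \<alpha> K m n e s \<rho> h \<xi> \<eta>) =
    erosion_charpoly (acoef e s \<rho> h) (tan \<theta>) (\<alpha> * n * h * cbar \<theta> m n e s h / \<rho>)
      (\<alpha> * m * h * cbar \<theta> m n e s h / \<rho>) K (\<alpha> * h) \<xi> (\<xi>\<^sup>2 + \<eta>\<^sup>2) y"
proof -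
  have "complex_of_real (tan \<theta>) \<noteq> 0" "complex_of_real \<rho> \<noteq> 0" "complex_of_real h \<noteq> 0"
    using assms by simp_all
  then show ?thesis
    unfolding det_3 symbolA_def Let_def erosion_charpoly_def
    by (simp add: A0_def A1_def A2_def mat_def, simp add: field_simps, simp add: algebra_simps power2_eq_square)
qed

lemma erosion_charpoly_sequence_symbolA:
  fixes \<xi>s \<eta>s :: "nat \<Rightarrow> real"
  assumes "0 < \<theta>" "\<theta> < pi / 2" "0 < e" "0 < s" "0 < \<rho>" "0 < h"
    and \<xi>_nonzero: "\<forall>k. \<xi>s k \<noteq> 0" and \<xi>_tendsto: "\<xi>s \<longlonglongrightarrow> 0"
    and \<eta>_tendsto: "(\<lambda>k. (\<eta>s k)\<^sup>2 / \<xi>s k) \<longlonglongrightarrow> 0"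
  shows "erosion_charpoly_sequence (acoef e s \<rho> h) (tan \<theta>)
    (\<lambda>k. \<xi>s k) (\<lambda>k. (\<xi>s k)\<^sup>2 + (\<eta>s k)\<^sup>2)"
proof
  define \<zeta> where "\<zeta> k = (\<xi>s k)\<^sup>2 + (\<eta>s k)\<^sup>2" for k
  have \<zeta>_pos: "0 < \<zeta> k" for k
    using \<xi>_nonzero by (simp add: \<zeta>_def sum_power2_gt_zero_iff)
  show "complex_of_real (acoef e s \<rho> h) \<noteq> 0" "complex_of_real (tan \<theta>) \<noteq> 0"
    using assms tan_gt_zero[of \<theta>] by (simp_all add: acoef_def)
  show "complex_of_real (\<xi>s k) \<noteq> 0" for k
    using \<xi>_nonzero by simp
  show "complex_of_real ((\<xi>s k)\<^sup>2 + (\<eta>s k)\<^sup>2) \<noteq> 0" for k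
    using \<zeta>_pos[of k] unfolding \<zeta>_def by (metis of_real_eq_0_iff less_irrefl)
  show "(\<lambda>k. complex_of_real (\<xi>s k)) \<longlonglongrightarrow> 0"
    using tendsto_of_real[OF \<xi>_tendsto] by simp
  have "(\<lambda>k. \<xi>s k + (\<eta>s k)\<^sup>2 / \<xi>s k) \<longlonglongrightarrow> 0 + 0"
    by (intro tendsto_add \<xi>_tendsto \<eta>_tendsto)
  moreover have "\<zeta> k / \<xi>s k = \<xi>s k + (\<eta>s k)\<^sup>2 / \<xi>s k" for k
    using \<xi>_nonzero by (simp add: \<zeta>_def field_simps power2_eq_square)
  ultimately have "(\<lambda>k. \<zeta> k / \<xi>s k) \<longlonglongrightarrow> 0"
    by simp
  from tendsto_of_real[OF this, where 'a = complex]
  show "(\<lambda>k. complex_of_real ((\<xi>s k)\<^sup>2 + (\<eta>s k)\<^sup>2) / complex_of_real (\<xi>s k)) \<longlonglongrightarrow> 0"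
    by (simp add: \<zeta>_def)
  show "cmod (complex_of_real (\<xi>s k) ^ 2 / complex_of_real ((\<xi>s k)\<^sup>2 + (\<eta>s k)\<^sup>2)) \<le> 1" for k
  proof -
    have "(\<xi>s k)\<^sup>2 / ((\<xi>s k)\<^sup>2 + (\<eta>s k)\<^sup>2) \<le> 1"
      using \<zeta>_pos[of k] by (simp add: \<zeta>_def)
    then show ?thesis
      unfolding of_real_power[symmetric] of_real_divide[symmetric] norm_of_real by simp
  qed
qed

lemma symbolA_eigenvalue_asymptotics:
  fixes \<theta> \<alpha> K m n e s \<rho> h :: real and \<xi>s \<eta>s :: "nat \<Rightarrow> real"
  assumes "0 < \<theta>" "\<theta> < pi / 2" "0 < e" "0 < s" "0 < \<rho>" "0 < h"
    and \<xi>_nonzero: "\<forall>k. \<xi>s k \<noteq> 0" and \<xi>_tendsto: "\<xi>s \<longlonglongrightarrow> 0"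
    and \<eta>_tendsto: "(\<lambda>k. (\<eta>s k)\<^sup>2 / \<xi>s k) \<longlonglongrightarrow> 0"
  shows "\<exists>l1 l2 l3 :: nat \<Rightarrow> complex.
           (\<forall>k x. det (mat x - symbolA \<theta> \<alpha> K m n e s \<rho> h (\<xi>s k) (\<eta>s k))
                   = (x - l1 k) * (x - l2 k) * (x - l3 k)) \<and>
           (\<lambda>k. (l1 k - lead1 \<theta> \<alpha> K m n e s \<rho> h (\<xi>s k) (\<eta>s k))
                 / of_real ((\<xi>s k)\<^sup>2 + (\<eta>s k)\<^sup>2)) \<longlonglongrightarrow> 0 \<and>
           (\<lambda>k. (l2 k - lead2 \<theta> \<alpha> h (\<xi>s k) (\<eta>s k))
                 / of_real ((\<xi>s k)\<^sup>2 + (\<eta>s k)\<^sup>2)) \<longlonglongrightarrow> 0 \<and>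
           l3 \<longlonglongrightarrow> - of_real (acoef e s \<rho> h)"
proof -
  define c where "c = cbar \<theta> m n e s h"
  define \<zeta> where "\<zeta> k = (\<xi>s k)\<^sup>2 + (\<eta>s k)\<^sup>2" for k
  have tan_pos: "0 < tan \<theta>" using assms by (simp add: tan_gt_zero)
  interpret erosion_charpoly_sequence "acoef e s \<rho> h" "tan \<theta>" "\<alpha> * n * h * c / \<rho>" "\<alpha> * m * h * c / \<rho>"
    K "\<alpha> * h" "\<lambda>k. \<xi>s k" "\<lambda>k. \<zeta> k"
    unfolding \<zeta>_def by (rule erosion_charpoly_sequence_symbolA[OF assms])
  obtain l1 l2 l3 where factor: "\<And>k y. P k y = (y - l1 k) * (y - l2 k) * (y - l3 k)"
    and l1: "(\<lambda>k. (l1 k - approx_root1 k) / complex_of_real (\<zeta> k)) \<longlonglongrightarrow> 0"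
    and l2: "(\<lambda>k. (l2 k - approx_root2 k) / complex_of_real (\<zeta> k)) \<longlonglongrightarrow> 0"
    and l3: "l3 \<longlonglongrightarrow> - complex_of_real (acoef e s \<rho> h)"
    using charpoly_roots_tendsto by blast
  show ?thesis
  proof (intro exI conjI allI)
    show "det (mat y - symbolA \<theta> \<alpha> K m n e s \<rho> h (\<xi>s k) (\<eta>s k)) = (y - l1 k) * (y - l2 k) * (y - l3 k)" for k y
      using det_symbolA[of \<theta> \<rho> h y \<alpha> K m n e s "\<xi>s k" "\<eta>s k"] factor[of k y] tan_pos assms
      by (simp add: c_def \<zeta>_def)
    have "lead1 \<theta> \<alpha> K m n e s \<rho> h (\<xi>s k) (\<eta>s k) = approx_root1 k" for k
    proof -
      have "lead1 \<theta> \<alpha> K m n e s \<rho> h (\<xi>s k) (\<eta>s k)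
          = complex_of_real (- (K - \<alpha> * m * h * c / \<rho>) * \<zeta> k - \<alpha> * n * h * c / \<rho> * (\<xi>s k)\<^sup>2)"
        unfolding lead1_def Let_def c_def[symmetric] by (rule arg_cong[where f = of_real]) (simp add: \<zeta>_def algebra_simps)
      then show ?thesis
        unfolding approx_root1_def by simp
    qed
    then show "(\<lambda>k. (l1 k - lead1 \<theta> \<alpha> K m n e s \<rho> h (\<xi>s k) (\<eta>s k)) / ((\<xi>s k)\<^sup>2 + (\<eta>s k)\<^sup>2)) \<longlonglongrightarrow> 0"
      using l1 by (simp add: \<zeta>_def)
    have "lead2 \<theta> \<alpha> h (\<xi>s k) (\<eta>s k) = approx_root2 k" for k
      unfolding approx_root2_def by (simp add: lead2_def \<zeta>_def)
    then show "(\<lambda>k. (l2 k - lead2 \<theta> \<alpha> h (\<xi>s k) (\<eta>s k)) / ((\<xi>s k)\<^sup>2 + (\<eta>s k)\<^sup>2)) \<longlonglongrightarrow> 0"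
      using l2 by (simp add: \<zeta>_def)
  qed (fact l3)
qed

lemma lead_spectrally_stable_iff:
  assumes "0 < \<alpha>" "0 < e" "0 < s" "0 < \<rho>" "0 < h"
  shows "(Re (lead1 \<theta> \<alpha> K m n e s \<rho> h \<xi> \<eta>) < 0 \<and> Re (lead2 \<theta> \<alpha> h \<xi> \<eta>) < 0 \<and> - acoef e s \<rho> h < 0)
    \<longleftrightarrow> (K * \<rho> + \<alpha> * h * cbar \<theta> m n e s h * (n - m)) * \<xi>\<^sup>2 > (\<alpha> * m * h * cbar \<theta> m n e s h - K * \<rho>) * \<eta>\<^sup>2"
proof -
  define c where "c = cbar \<theta> m n e s h"
  have "Re (lead1 \<theta> \<alpha> K m n e s \<rho> h \<xi> \<eta>)
      = - ((K * \<rho> + \<alpha> * h * c * (n - m)) * \<xi>\<^sup>2 - (\<alpha> * m * h * c - K * \<rho>) * \<eta>\<^sup>2) / \<rho>"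
    using \<open>0 < \<rho>\<close> by (simp add: lead1_def Let_def c_def field_simps)
  then have lead1_iff: "Re (lead1 \<theta> \<alpha> K m n e s \<rho> h \<xi> \<eta>) < 0
      \<longleftrightarrow> (K * \<rho> + \<alpha> * h * c * (n - m)) * \<xi>\<^sup>2 > (\<alpha> * m * h * c - K * \<rho>) * \<eta>\<^sup>2"
    using \<open>0 < \<rho>\<close> by (simp add: divide_less_0_iff)
  have "Re (lead2 \<theta> \<alpha> h \<xi> \<eta>) < 0" if "Re (lead1 \<theta> \<alpha> K m n e s \<rho> h \<xi> \<eta>) < 0"
  proof -
    have "\<xi> \<noteq> 0 \<or> \<eta> \<noteq> 0"
      using that by (auto simp: lead1_def)
    then have "0 < \<xi>\<^sup>2 + \<eta>\<^sup>2"
      by (simp add: sum_power2_gt_zero_iff)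
    then show ?thesis
      using assms by (simp add: lead2_def)
  qed
  moreover have "0 < acoef e s \<rho> h"
    using assms by (simp add: acoef_def)
  ultimately show ?thesis
    using lead1_iff by (auto simp: c_def)
qed

lemma symbolA_eventually_unstable:
  fixes \<theta> \<alpha> K m n e s \<rho> h :: real and \<xi>s \<eta>s :: "nat \<Rightarrow> real"
  assumes "0 < \<theta>" "\<theta> < pi / 2" "0 < e" "0 < s" "0 < \<rho>" "0 < h"
    and K_lt_m: "K < \<alpha> * m * h * cbar \<theta> m n e s h / \<rho>"
    and K_lt_m_minus_n: "K < \<alpha> * (m - n) * h * cbar \<theta> m n e s h / \<rho>"
    and \<xi>_nonzero: "\<forall>k. \<xi>s k \<noteq> 0" and "\<xi>s \<longlonglongrightarrow> 0" and "(\<lambda>k. (\<eta>s k)\<^sup>2 / \<xi>s k) \<longlonglongrightarrow> 0"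
  shows "\<forall>\<^sub>F k in sequentially. \<not> spectrally_stable (symbolA \<theta> \<alpha> K m n e s \<rho> h (\<xi>s k) (\<eta>s k))"
proof -
  define c where "c = cbar \<theta> m n e s h"
  obtain l1 l2 l3 where factor: "\<And>k y. det (mat y - symbolA \<theta> \<alpha> K m n e s \<rho> h (\<xi>s k) (\<eta>s k))
        = (y - l1 k) * (y - l2 k) * (y - l3 k)"
    and l1: "(\<lambda>k. (l1 k - lead1 \<theta> \<alpha> K m n e s \<rho> h (\<xi>s k) (\<eta>s k)) / of_real ((\<xi>s k)\<^sup>2 + (\<eta>s k)\<^sup>2)) \<longlonglongrightarrow> 0"
    using symbolA_eigenvalue_asymptotics[of \<theta> e s \<rho> h \<xi>s \<eta>s \<alpha> K m n] assms by blast
  define d1 where "d1 = \<alpha> * (m - n) * h * c / \<rho> - K"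
  define d2 where "d2 = \<alpha> * m * h * c / \<rho> - K"
  have "0 < min d1 d2"
    using K_lt_m K_lt_m_minus_n by (simp add: d1_def d2_def c_def)
  moreover have "min d1 d2 * ((\<xi>s k)\<^sup>2 + (\<eta>s k)\<^sup>2) \<le> Re (lead1 \<theta> \<alpha> K m n e s \<rho> h (\<xi>s k) (\<eta>s k))" for k
  proof -
    have "Re (lead1 \<theta> \<alpha> K m n e s \<rho> h (\<xi>s k) (\<eta>s k)) = d1 * (\<xi>s k)\<^sup>2 + d2 * (\<eta>s k)\<^sup>2"
      by (simp add: lead1_def Let_def d1_def d2_def c_def algebra_simps diff_divide_distrib)
    then show ?thesis
      by (simp add: distrib_left add_mono mult_right_mono)
  qed
  moreover have "0 < (\<xi>s k)\<^sup>2 + (\<eta>s k)\<^sup>2" for k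
    using \<xi>_nonzero by (simp add: sum_power2_gt_zero_iff)
  ultimately have "\<forall>\<^sub>F k in sequentially. 0 < Re (l1 k)"
    using eventually_Re_pos_of_relative_error[OF l1] by blast
  then show ?thesis
  proof eventually_elim
    case (elim k)
    moreover have "det (mat (l1 k) - symbolA \<theta> \<alpha> K m n e s \<rho> h (\<xi>s k) (\<eta>s k)) = 0"
      by (simp add: factor)
    ultimately show ?case
      unfolding spectrally_stable_def by force
  qed
qed

theorem proposition4p2:
  fixes \<theta> \<alpha> K m n e s \<rho> h :: real
  assumes "0 < \<theta>" "\<theta> < pi / 2" "0 < \<alpha>" "0 \<le> K" "0 < m" "0 < n" "0 < e" "0 < s"
    and "0 < \<rho>" "0 < h"
    and hK: "K < \<alpha> * m * h * cbar \<theta> m n e s h / \<rho>"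
  shows
    "(\<forall>\<xi>s \<eta>s :: nat \<Rightarrow> real.
        (\<forall>k. \<xi>s k \<noteq> 0) \<and> \<xi>s \<longlonglongrightarrow> 0 \<and> \<eta>s \<longlonglongrightarrow> 0 \<and> (\<lambda>k. (\<eta>s k)\<^sup>2 / \<xi>s k) \<longlonglongrightarrow> 0 \<longrightarrow>
        (\<exists>l1 l2 l3 :: nat \<Rightarrow> complex.
           (\<forall>k x. det (mat x - symbolA \<theta> \<alpha> K m n e s \<rho> h (\<xi>s k) (\<eta>s k))
                   = (x - l1 k) * (x - l2 k) * (x - l3 k)) \<and>
           (\<lambda>k. (l1 k - lead1 \<theta> \<alpha> K m n e s \<rho> h (\<xi>s k) (\<eta>s k))
                 / of_real ((\<xi>s k)\<^sup>2 + (\<eta>s k)\<^sup>2)) \<longlonglongrightarrow> 0 \<and>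
           (\<lambda>k. (l2 k - lead2 \<theta> \<alpha> h (\<xi>s k) (\<eta>s k))
                 / of_real ((\<xi>s k)\<^sup>2 + (\<eta>s k)\<^sup>2)) \<longlonglongrightarrow> 0 \<and>
           l3 \<longlonglongrightarrow> - of_real (acoef e s \<rho> h)))
     \<and>
     (\<forall>\<xi> \<eta> :: real.
        (Re (lead1 \<theta> \<alpha> K m n e s \<rho> h \<xi> \<eta>) < 0 \<and> Re (lead2 \<theta> \<alpha> h \<xi> \<eta>) < 0
           \<and> - acoef e s \<rho> h < 0)
        \<longleftrightarrow> (K * \<rho> + \<alpha> * h * cbar \<theta> m n e s h * (n - m)) * \<xi>\<^sup>2
              > (\<alpha> * m * h * cbar \<theta> m n e s h - K * \<rho>) * \<eta>\<^sup>2)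
     \<and>
     (K < \<alpha> * (m - n) * h * cbar \<theta> m n e s h / \<rho> \<longrightarrow>
        (\<forall>\<xi>s \<eta>s :: nat \<Rightarrow> real.
           (\<forall>k. \<xi>s k \<noteq> 0) \<and> \<xi>s \<longlonglongrightarrow> 0 \<and> \<eta>s \<longlonglongrightarrow> 0 \<and> (\<lambda>k. (\<eta>s k)\<^sup>2 / \<xi>s k) \<longlonglongrightarrow> 0 \<longrightarrow>
           (\<forall>\<^sub>F k in sequentially.
              \<not> spectrally_stable (symbolA \<theta> \<alpha> K m n e s \<rho> h (\<xi>s k) (\<eta>s k)))))"
proof (intro conjI allI impI, goal_cases)
  case (1 \<xi>s \<eta>s)
  then show ?case
    using symbolA_eigenvalue_asymptotics[of \<theta> e s \<rho> h \<xi>s \<eta>s \<alpha> K m n] assms by blast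
next
  case (2 \<xi> \<eta>)
  show ?case
    using lead_spectrally_stable_iff[of \<alpha> e s \<rho> h \<theta> K m n \<xi> \<eta>] assms by blast
next
  case (3 \<xi>s \<eta>s)
  then show ?case
    using symbolA_eventually_unstable[of \<theta> e s \<rho> h K \<alpha> m n \<xi>s \<eta>s] assms by blast
qed

end
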